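(* The graph $T_9$ is a minimal non-word-representable graph: $T_9$ is not word-representable, but every graph obtained from $T_9$ by deleting one vertex is word-representable.
   Context: A graph $G=(V,E)$ is word-representable if there exists a word $w$ over the alphabet $V$ such that for all distinct $x,y\in V$, the letters $x$ and $y$ alternate in $w$ if and only if $xy\in E$ (alternation meaning that deleting all letters other than $x$ and $y$ leaves $xyxy\cdots$ or $yxyx\cdots$). The graph $T_9$ has vertex set $\{1,\dots,10\}$; the vertices $1,2,3,4,5$ form a clique, the vertices $6,7,8,9,10$ form an independent set, and the remaining edges are: $6$ is adjacent to $1,3$; $7$ is adjacent to $1,4$; $8$ is adjacent to $2,3$; $9$ is adjacent to $1,2,3,5$; $10$ is adjacent to $1,3,4,5$. *)

theory Defs
  imports Main
begin

definition alternate :: "'a list \<Rightarrow> 'a \<Rightarrow> 'a \<Rightarrow> bool" where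
  "alternate w x y \<longleftrightarrow>
     (let u = filter (\<lambda>z. z = x \<or> z = y) w in
        \<forall>i. Suc i < length u \<longrightarrow> u ! i \<noteq> u ! Suc i)"

definition word_representable :: "'a set \<Rightarrow> ('a \<Rightarrow> 'a \<Rightarrow> bool) \<Rightarrow> bool" where
  "word_representable V E \<longleftrightarrow>
     (\<exists>w. set w = V \<and>
        (\<forall>x\<in>V. \<forall>y\<in>V. x \<noteq> y \<longrightarrow> (alternate w x y \<longleftrightarrow> E x y)))"

definition T9_edges :: "(nat \<times> nat) set" where
  "T9_edges =
     {(a, b). a \<in> {1..5} \<and> b \<in> {1..5} \<and> a < b}
     \<union> {(1,6), (3,6), (1,7), (4,7), (2,8), (3,8),
        (1,9), (2,9), (3,9), (5,9), (1,10), (3,10), (4,10), (5,10)}"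

definition T9_V :: "nat set" where
  "T9_V = {1..10}"

definition T9_E :: "nat \<Rightarrow> nat \<Rightarrow> bool" where
  "T9_E x y \<longleftrightarrow> (x, y) \<in> T9_edges \<or> (y, x) \<in> T9_edges"

end

theory Submission
  imports Defs
begin

text \<open>
  Order the letters of a word by their first occurrence. If x and y alternate and x comes
  first, every prefix contains as many x's as y's or one more. Chaining these counting
  inequalities around a 4-cycle a, b, c, d whose first occurrences are increasing shows that
  a, c and b, d alternate too. Hence, for non-adjacent p, q with common neighbours x, y, the
  vertex x lies between p and q in first-occurrence order iff y does. In T9, eleven instances
  of this show that vertex 3 lies between any two vertices of the triangle 2, 4, 5 exactly
  when the third one does, which no linear order allows. The vertex-deleted subgraphs are
  represented by explicit words.
\<close>

lemma alternate_iff_distinct_adj: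
  "alternate w x y \<longleftrightarrow> distinct_adj (filter (\<lambda>z. z = x \<or> z = y) w)"
  by (simp add: alternate_def distinct_adj_conv_nth Let_def)

lemma alternate_commute: "alternate w x y \<longleftrightarrow> alternate w y x"
  by (simp add: alternate_iff_distinct_adj disj_commute)

definition first_occ :: "'a list \<Rightarrow> 'a \<Rightarrow> nat" where
  "first_occ w x = length (takeWhile (\<lambda>z. z \<noteq> x) w)"

lemma first_occ_Cons [simp]: "first_occ (z # w) x = (if z = x then 0 else Suc (first_occ w x))"
  by (simp add: first_occ_def)

lemma nth_first_occ: "x \<in> set w \<Longrightarrow> w ! first_occ w x = x"
  by (induction w) auto

lemma inj_on_first_occ: "inj_on (first_occ w) (set w)"
  by (rule inj_on_inverseI[where g = "(!) w"]) (rule nth_first_occ)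

definition leads :: "'a list \<Rightarrow> 'a \<Rightarrow> 'a \<Rightarrow> bool" where
  "leads w x y \<longleftrightarrow>
     (\<forall>n. count_list (take n w) y \<le> count_list (take n w) x \<and>
          count_list (take n w) x \<le> count_list (take n w) y + 1)"

lemma leads_Nil [simp]: "leads [] x y"
  by (simp add: leads_def)

lemma leads_Cons:
  assumes "x \<noteq> y"
  shows "leads (z # w) x y \<longleftrightarrow> (if z = x then leads w y x else z \<noteq> y \<and> leads w x y)"
proof -
  define ahead where
    "ahead a b u \<longleftrightarrow> count_list u b \<le> count_list u a \<and> count_list u a \<le> count_list u b + 1"
    for a b :: 'a and u
  have leads_ahead: "leads v a b \<longleftrightarrow> (\<forall>n. ahead a b (take n v))" for v a b
    by (simp add: leads_def ahead_def)
  have prefixes: "(\<forall>n. P (take n (z # w))) \<longleftrightarrow> P [] \<and> (\<forall>n. P (z # take n w))" for P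
    by (metis take_0 take_Suc_Cons not0_implies_Suc)
  have Cons_ahead: "leads (z # w) x y \<longleftrightarrow> (\<forall>n. ahead x y (z # take n w))"
    unfolding leads_ahead prefixes[of "ahead x y"] by (simp add: ahead_def)
  consider "z = x" | "z = y" | "z \<noteq> x" "z \<noteq> y" by blast
  then show ?thesis
  proof cases
    case 1
    then show ?thesis using assms Cons_ahead by (auto simp: leads_ahead ahead_def)
  next
    case 2
    then have "\<not> ahead x y [z]" using assms by (simp add: ahead_def)
    with 2 show ?thesis using assms Cons_ahead by (metis take_0)
  next
    case 3
    then show ?thesis using Cons_ahead by (simp add: leads_ahead ahead_def)
  qed
qed

lemma leads_iff_distinct_adj:
  "x \<noteq> y \<Longrightarrow> leads w x y \<longleftrightarrow> distinct_adj (y # filter (\<lambda>z. z = x \<or> z = y) w)"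
proof (induction w arbitrary: x y)
  case (Cons z w)
  have "filter (\<lambda>z. z = y \<or> z = x) w = filter (\<lambda>z. z = x \<or> z = y) w"
    by (simp add: disj_commute)
  with Cons show ?case
    by (auto simp: leads_Cons)
qed simp

lemma alternate_iff_leads:
  assumes "x \<noteq> y"
  shows "alternate w x y \<longleftrightarrow> leads w x y \<or> leads w y x"
proof -
  define u where "u = filter (\<lambda>z. z = x \<or> z = y) w"
  have "filter (\<lambda>z. z = y \<or> z = x) w = u"
    unfolding u_def by (simp add: disj_commute)
  then have "leads w x y \<or> leads w y x \<longleftrightarrow> distinct_adj (y # u) \<or> distinct_adj (x # u)"
    using assms leads_iff_distinct_adj[of x y w] leads_iff_distinct_adj[of y x w]
    unfolding u_def by simp
  also have "\<dots> \<longleftrightarrow> distinct_adj u"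
  proof (cases u)
    case (Cons a u')
    then have "a \<in> set u" by simp
    then have "a = x \<or> a = y" by (simp add: u_def)
    with Cons assms show ?thesis by auto
  qed simp
  finally show ?thesis
    by (simp add: alternate_iff_distinct_adj u_def)
qed

lemma leads_first_occ_less:
  "leads w x y \<Longrightarrow> x \<noteq> y \<Longrightarrow> y \<in> set w \<Longrightarrow> first_occ w x < first_occ w y"
  by (induction w) (auto simp: leads_Cons split: if_splits)

lemma alternate_imp_leads:
  assumes "alternate w x y" "x \<in> set w" "first_occ w x < first_occ w y"
  shows "leads w x y"
proof -
  have "x \<noteq> y" using assms(3) by auto
  moreover have "\<not> leads w y x"
    using leads_first_occ_less[of w y x] assms(2,3) \<open>x \<noteq> y\<close> by auto
  ultimately show ?thesis
    using assms(1) alternate_iff_leads[of x y w] by blast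
qed

lemma leads_square:
  assumes "leads w a b" "leads w b c" "leads w c d" "leads w a d"
  shows "leads w a c \<and> leads w b d"
  unfolding leads_def
proof (intro conjI allI)
  fix n
  let ?c = "\<lambda>v. count_list (take n w) v"
  have "?c b \<le> ?c a \<and> ?c a \<le> ?c b + 1" "?c c \<le> ?c b \<and> ?c b \<le> ?c c + 1"
       "?c d \<le> ?c c \<and> ?c c \<le> ?c d + 1" "?c d \<le> ?c a \<and> ?c a \<le> ?c d + 1"
    using assms unfolding leads_def by blast+
  then show "?c c \<le> ?c a" "?c a \<le> ?c c + 1" "?c d \<le> ?c b" "?c b \<le> ?c d + 1"
    by linarith+
qed

lemma alternate_shortcut:
  assumes "a \<in> set w" "b \<in> set w" "c \<in> set w"
    and "first_occ w a < first_occ w b" "first_occ w b < first_occ w c" "first_occ w c < first_occ w d"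
    and "alternate w a b" "alternate w b c" "alternate w c d" "alternate w a d"
  shows "alternate w a c \<and> alternate w b d"
proof -
  have "leads w a c \<and> leads w b d"
    using assms by (intro leads_square alternate_imp_leads) auto
  moreover have "a \<noteq> c" "b \<noteq> d" using assms(4-6) by auto
  ultimately show ?thesis
    using alternate_iff_leads[of a c w] alternate_iff_leads[of b d w] by simp
qed

text \<open>
  For injective f this says that x lies strictly between p and q. In this form
  \<open>between f x p r \<longleftrightarrow> (between f x p q \<noteq> between f x q r)\<close> holds propositionally,
  which is how facts about different pairs are combined below.
\<close>
definition between :: "('a \<Rightarrow> 'b::linorder) \<Rightarrow> 'a \<Rightarrow> 'a \<Rightarrow> 'a \<Rightarrow> bool" where
  "between f x p q \<longleftrightarrow> (f p < f x) \<noteq> (f q < f x)"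

lemma between_commute: "between f x p q \<longleftrightarrow> between f x q p"
  by (auto simp: between_def)

lemma first_occ_between_imp_alternate:
  assumes "p \<in> set w" "q \<in> set w" "x \<in> set w" "y \<in> set w" "distinct [p, q, x, y]"
    and "first_occ w p < first_occ w q"
    and "between (first_occ w) x p q" "\<not> between (first_occ w) y p q"
    and "alternate w p x" "alternate w q x" "alternate w p y" "alternate w q y"
  shows "alternate w p q"
proof -
  let ?f = "first_occ w"
  have inj: "inj_on ?f {p, q, x, y}"
    using inj_on_first_occ[of w] by (rule inj_on_subset) (use assms(1-4) in auto)
  then have "?f p < ?f x" "?f x < ?f q"
    using assms(5-7) unfolding between_def inj_on_def by auto
  moreover have "?f y < ?f p \<or> ?f q < ?f y"
    using inj assms(5,6,8) unfolding between_def inj_on_def by auto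
  ultimately show ?thesis
  proof (elim disjE)
    assume "?f y < ?f p"
    then show ?thesis
      using alternate_shortcut[of y w p x q] assms \<open>?f p < ?f x\<close> \<open>?f x < ?f q\<close>
        alternate_commute[of w y p] alternate_commute[of w x q] alternate_commute[of w y q]
      by blast
  next
    assume "?f q < ?f y"
    then show ?thesis
      using alternate_shortcut[of p w x q y] assms \<open>?f p < ?f x\<close> \<open>?f x < ?f q\<close>
        alternate_commute[of w x q]
      by blast
  qed
qed

lemma first_occ_between_iff:
  assumes "p \<in> set w" "q \<in> set w" "x \<in> set w" "y \<in> set w" "distinct [p, q, x, y]"
    and "alternate w p x" "alternate w q x" "alternate w p y" "alternate w q y"
    and "\<not> alternate w p q"
  shows "between (first_occ w) x p q \<longleftrightarrow> between (first_occ w) y p q"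
proof (rule ccontr)
  let ?f = "first_occ w"
  assume differ: "\<not> ?thesis"
  have "?f p \<noteq> ?f q"
    using inj_on_first_occ[of w] assms(1,2,5) by (auto simp: inj_on_def)
  then consider
      "?f p < ?f q" "between ?f x p q" "\<not> between ?f y p q"
    | "?f p < ?f q" "between ?f y p q" "\<not> between ?f x p q"
    | "?f q < ?f p" "between ?f x q p" "\<not> between ?f y q p"
    | "?f q < ?f p" "between ?f y q p" "\<not> between ?f x q p"
    using differ between_commute by (metis linorder_neqE_nat)
  then show False
  proof cases
    case 1
    then show False
      using first_occ_between_imp_alternate[of p w q x y] assms by auto
  next
    case 2
    then show False
      using first_occ_between_imp_alternate[of p w q y x] assms by auto
  next
    case 3
    then show False
      using first_occ_between_imp_alternate[of q w p x y] assms alternate_commute[of w p q] by auto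
  next
    case 4
    then show False
      using first_occ_between_imp_alternate[of q w p y x] assms alternate_commute[of w p q] by auto
  qed
qed

definition represents :: "'a list \<Rightarrow> 'a set \<Rightarrow> ('a \<Rightarrow> 'a \<Rightarrow> bool) \<Rightarrow> bool" where
  "represents w V E \<longleftrightarrow> set w = V \<and> (\<forall>x\<in>V. \<forall>y\<in>V. x \<noteq> y \<longrightarrow> (alternate w x y \<longleftrightarrow> E x y))"

lemma word_representable_iff_represents: "word_representable V E \<longleftrightarrow> (\<exists>w. represents w V E)"
  by (simp add: word_representable_def represents_def)

lemma represents_between_iff:
  assumes "represents w V E"
    and "p \<in> V" "q \<in> V" "x \<in> V" "y \<in> V" "distinct [p, q, x, y]"
    and "E p x" "E q x" "E p y" "E q y" "\<not> E p q"
  shows "between (first_occ w) x p q \<longleftrightarrow> between (first_occ w) y p q"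
  using assms by (intro first_occ_between_iff) (auto simp: represents_def)

text \<open>
  Exactly one of a, b, c lies between the other two; v would have to lie between those two
  but on neither side of the middle one.
\<close>
lemma no_point_mimics_triangle:
  fixes f :: "'a \<Rightarrow> 'b::linorder"
  assumes "inj_on f {a, b, c, v}" "distinct [a, b, c, v]"
    and "between f v a b \<longleftrightarrow> between f c a b"
    and "between f v b c \<longleftrightarrow> between f a b c"
    and "between f v a c \<longleftrightarrow> between f b a c"
  shows False
proof -
  have "f a \<noteq> f b" "f a \<noteq> f c" "f a \<noteq> f v" "f b \<noteq> f c" "f b \<noteq> f v" "f c \<noteq> f v"
    using assms(1,2) by (auto simp: inj_on_def)
  then show False
    using assms(3-5) unfolding between_def by (auto; order)
qed

lemma T9_V_eq: "T9_V = {1, 2, 3, 4, 5, 6, 7, 8, 9, 10}"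
  unfolding T9_V_def by (auto simp: atLeastAtMost_upt upt_rec)

lemma T9_not_word_representable: "\<not> word_representable T9_V T9_E"
proof
  assume "word_representable T9_V T9_E"
  then obtain w where w: "represents w T9_V T9_E"
    by (auto simp: word_representable_iff_represents)
  define f where "f = first_occ w"
  have diamond: "between f x p q \<longleftrightarrow> between f y p q"
    if "T9_E p x" "T9_E q x" "T9_E p y" "T9_E q y" "\<not> T9_E p q"
      and "p \<in> T9_V" "q \<in> T9_V" "x \<in> T9_V" "y \<in> T9_V" "distinct [p, q, x, y]" for p q x y
    using represents_between_iff[OF w] that unfolding f_def by blast
  have "between f 3 2 10 \<longleftrightarrow> between f 4 2 10" "between f 3 2 10 \<longleftrightarrow> between f 5 2 10"
    "between f 3 9 10 \<longleftrightarrow> between f 5 9 10"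
    "between f 2 4 9 \<longleftrightarrow> between f 3 4 9" "between f 3 4 9 \<longleftrightarrow> between f 5 4 9"
    "between f 1 5 6 \<longleftrightarrow> between f 3 5 6" "between f 1 6 10 \<longleftrightarrow> between f 3 6 10"
    "between f 1 5 7 \<longleftrightarrow> between f 4 5 7" "between f 1 7 10 \<longleftrightarrow> between f 4 7 10"
    "between f 2 5 8 \<longleftrightarrow> between f 3 5 8" "between f 2 8 9 \<longleftrightarrow> between f 3 8 9"
    by (rule diamond; simp add: T9_E_def T9_edges_def T9_V_def)+
  then have "between f 3 2 5 \<longleftrightarrow> between f 4 2 5" "between f 3 4 5 \<longleftrightarrow> between f 2 4 5"
    "between f 3 2 4 \<longleftrightarrow> between f 5 2 4"
    unfolding between_def by argo+
  moreover have "inj_on f T9_V"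
    using inj_on_first_occ[of w] w by (simp add: f_def represents_def)
  then have "inj_on f {2, 4, 5, 3}"
    by (rule inj_on_subset) (simp add: T9_V_eq)
  ultimately show False
    using no_point_mimics_triangle[of f 2 4 5 3] by (simp add: between_commute)
qed

lemma T9_vertex_deleted_representations:
  "represents [10, 9, 8, 2, 6, 3, 6, 8, 5, 9, 7, 4, 7, 2, 10, 3, 5, 4] (T9_V - {1}) T9_E"
  "represents [10, 9, 5, 6, 8, 3, 8, 1, 6, 9, 4, 10, 5, 3, 7, 1, 4, 7] (T9_V - {2}) T9_E"
  "represents [7, 10, 9, 8, 2, 8, 5, 6, 1, 6, 9, 4, 2, 10, 5, 7, 1, 4] (T9_V - {3}) T9_E"
  "represents [10, 9, 8, 2, 3, 8, 1, 5, 9, 2, 10, 6, 3, 7, 1, 7, 6, 5] (T9_V - {4}) T9_E"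
  "represents [9, 7, 10, 4, 6, 1, 8, 3, 10, 2, 8, 6, 7, 4, 9, 1, 7, 3, 6, 2, 8, 9, 10, 4, 1, 3, 2]
     (T9_V - {5}) T9_E"
  "represents [7, 10, 9, 8, 2, 3, 8, 5, 1, 9, 4, 2, 10, 3, 5, 7, 1, 4] (T9_V - {6}) T9_E"
  "represents [6, 10, 2, 4, 9, 5, 1, 8, 3, 2, 8, 9, 10, 4, 5, 6, 1, 3] (T9_V - {7}) T9_E"
  "represents [7, 10, 9, 2, 5, 6, 3, 1, 6, 9, 4, 2, 10, 5, 3, 7, 1, 4] (T9_V - {8}) T9_E"
  "represents [6, 10, 2, 5, 7, 4, 1, 7, 8, 3, 2, 8, 10, 5, 4, 6, 1, 3] (T9_V - {9}) T9_E"
  "represents [1, 7, 8, 3, 2, 8, 5, 4, 9, 6, 1, 3, 6, 2, 5, 9, 7, 4] (T9_V - {10}) T9_E"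
  by (simp add: T9_V_eq insert_Diff_if represents_def alternate_iff_distinct_adj
      T9_E_def T9_edges_def, auto)+

lemma T9_vertex_deleted_word_representable:
  assumes "v \<in> T9_V"
  shows "word_representable (T9_V - {v}) T9_E"
proof -
  have "v \<in> {1, 2, 3, 4, 5, 6, 7, 8, 9, 10}"
    using assms by (simp add: T9_V_eq)
  then show ?thesis
    unfolding word_representable_iff_represents
    using T9_vertex_deleted_representations by (elim insertE emptyE) blast+
qed

theorem theorem17:
  shows "\<not> word_representable T9_V T9_E \<and>
         (\<forall>v\<in>T9_V. word_representable (T9_V - {v}) T9_E)"
  using T9_not_word_representable T9_vertex_deleted_word_representable by blast

end
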